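(* Let $\bar{\mathcal A}\subseteq\mathcal A$ and $\bar{\mathcal T}\subseteq\mathcal T$ with $|\bar{\mathcal A}|\ge|\bar{\mathcal T}|\ge 1$. Let $\bar{\mathcal E}=\bar{\mathcal A}\times\bar{\mathcal T}$ and assume $|\bar{\mathcal E}|>1$. Suppose the robustness margin is strictly positive, $r_{\bar{\mathcal A},\bar{\mathcal T}}(\mathcal W)>0$. Then every bottleneck minimising assignment $\Pi=\{\pi_{i,j}\}\in\mathcal B_{\bar{\mathcal A},\bar{\mathcal T}}(\bar{\mathcal E},\mathcal W)$ satisfies $\pi_{i^*,j^*}=1$ for every maximum-margin bottleneck edge $(i^*,j^* )\in e_{\bar{\mathcal A},\bar{\mathcal T}}(\mathcal W)$.
   Context: Let $\mathcal A$ be a finite set of agents with $|\mathcal A|=m>1$ and $\mathcal T$ a finite set of tasks with $m\ge|\mathcal T|=n\ge 1$. Let $\mathcal W=\{w_{i,j}\ge 0:(i,j)\in\mathcal A\times\mathcal T\}$ be given assignment weights. An assignment is a family $\Pi=\{\pi_{i,j}\in\{0,1\}:(i,j)\in\mathcal A\times\mathcal T\}$ ($\pi_{i,j}=1$ means agent $i$ is assigned task $j$). For $\bar{\mathcal A}\subseteq\mathcal A$, $\bar{\mathcal T}\subseteq\mathcal T$ and an edge set $\hat{\mathcal E}\subseteq\bar{\mathcal A}\times\bar{\mathcal T}$, the set of admissible assignments $\mathcal P_{\bar{\mathcal A},\bar{\mathcal T}}(\hat{\mathcal E})$ is the set of assignments $\Pi$ with $\sum_{i:(i,j)\in\hat{\mathcal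 E}}\pi_{i,j}=1$ for every $j\in\bar{\mathcal T}$ and $\sum_{j:(i,j)\in\hat{\mathcal E}}\pi_{i,j}\le 1$ for every $i\in\bar{\mathcal A}$. Define $b(\Pi,\hat{\mathcal E},\mathcal W)=\max_{(i,j)\in\hat{\mathcal E}}\pi_{i,j}w_{i,j}$; the bottleneck weight $B_{\bar{\mathcal A},\bar{\mathcal T}}(\hat{\mathcal E},\mathcal W)=\min_{\Pi\in\mathcal P_{\bar{\mathcal A},\bar{\mathcal T}}(\hat{\mathcal E})}b(\Pi,\hat{\mathcal E},\mathcal W)$ (with $\min\emptyset=+\infty$); the set of bottleneck minimising assignments $\mathcal B_{\bar{\mathcal A},\bar{\mathcal T}}(\hat{\mathcal E},\mathcal W)=\arg\min_{\Pi\in\mathcal P_{\bar{\mathcal A},\bar{\mathcal T}}(\hat{\mathcal E})}b(\Pi,\hat{\mathcal E},\mathcal W)$; and $E_{\bar{\mathcal A},\bar{\mathcal T}}(\hat{\mathcal E},\mathcal W)=\{(i,j)\in\hat{\mathcal E}: w_{i,j}=B_{\bar{\mathcal A},\bar{\mathcal T}}(\hat{\mathcal E},\mathcal W)\}$. For the complete edge set $\bar{\mathcal E}=\bar{\mathcal A}\times\bar{\mathcal T}$ with $|\bar{\mathcal E}|>1$, the set of maximum-margin bottleneck edges is $e_{\bar{\mathcal A},\bar{\mathcal T}}(\mathcal W)=\arg\max_{(i,j)\in E_{\bar{\mathcal A},\bar{\mathcal T}}(\bar{\mathcal E},\mathcal W)}B_{\bar{\mathcal A},\bar{\mathcal T}}(\bar{\mathcal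 E}\setminus\{(i,j)\},\mathcal W)$ and the robustness margin is $r_{\bar{\mathcal A},\bar{\mathcal T}}(\mathcal W)=\max_{(i,j)\in E_{\bar{\mathcal A},\bar{\mathcal T}}(\bar{\mathcal E},\mathcal W)}\big(B_{\bar{\mathcal A},\bar{\mathcal T}}(\bar{\mathcal E}\setminus\{(i,j)\},\mathcal W)-w_{i,j}\big)$. If $|\bar{\mathcal E}|=1$, one sets $e_{\bar{\mathcal A},\bar{\mathcal T}}(\mathcal W)=\bar{\mathcal E}$ and $r_{\bar{\mathcal A},\bar{\mathcal T}}(\mathcal W)=\infty$. *)

theory Defs
  imports "HOL-Analysis.Analysis"
begin

(* Agents have type 'a, tasks type 'b; an assignment is asg :: 'a => 'b => nat with values in {0,1}
   on the global agent/task sets A, T.  Weights W :: 'a => 'b => real. *)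

definition is_assignment :: "'a set \<Rightarrow> 'b set \<Rightarrow> ('a \<Rightarrow> 'b \<Rightarrow> nat) \<Rightarrow> bool" where
  "is_assignment A T asg \<longleftrightarrow> (\<forall>i\<in>A. \<forall>j\<in>T. asg i j \<in> {0, 1})"

definition admissible ::
  "'a set \<Rightarrow> 'b set \<Rightarrow> 'a set \<Rightarrow> 'b set \<Rightarrow> ('a \<times> 'b) set \<Rightarrow> ('a \<Rightarrow> 'b \<Rightarrow> nat) set" where
  "admissible A T Ab Tb E = {asg. is_assignment A T asg
      \<and> (\<forall>j\<in>Tb. (\<Sum>i\<in>{i. (i, j) \<in> E}. asg i j) = 1)
      \<and> (\<forall>i\<in>Ab. (\<Sum>j\<in>{j. (i, j) \<in> E}. asg i j) \<le> 1)}"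

definition bval :: "('a \<Rightarrow> 'b \<Rightarrow> nat) \<Rightarrow> ('a \<times> 'b) set \<Rightarrow> ('a \<Rightarrow> 'b \<Rightarrow> real) \<Rightarrow> ereal" where
  "bval asg E W = Sup ((\<lambda>(i, j). ereal (real (asg i j) * W i j)) ` E)"

(* bottleneck weight B, with min of empty set = +infinity *)
definition bottleneck ::
  "'a set \<Rightarrow> 'b set \<Rightarrow> 'a set \<Rightarrow> 'b set \<Rightarrow> ('a \<times> 'b) set \<Rightarrow> ('a \<Rightarrow> 'b \<Rightarrow> real) \<Rightarrow> ereal" where
  "bottleneck A T Ab Tb E W = Inf ((\<lambda>asg. bval asg E W) ` admissible A T Ab Tb E)"

definition bottleneck_min ::
  "'a set \<Rightarrow> 'b set \<Rightarrow> 'a set \<Rightarrow> 'b set \<Rightarrow> ('a \<times> 'b) set \<Rightarrow> ('a \<Rightarrow> 'b \<Rightarrow> real) \<Rightarrow> ('a \<Rightarrow> 'b \<Rightarrow> nat) set" where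
  "bottleneck_min A T Ab Tb E W =
     {asg \<in> admissible A T Ab Tb E. bval asg E W = bottleneck A T Ab Tb E W}"

definition bottleneck_edges ::
  "'a set \<Rightarrow> 'b set \<Rightarrow> 'a set \<Rightarrow> 'b set \<Rightarrow> ('a \<times> 'b) set \<Rightarrow> ('a \<Rightarrow> 'b \<Rightarrow> real) \<Rightarrow> ('a \<times> 'b) set" where
  "bottleneck_edges A T Ab Tb E W =
     {(i, j) \<in> E. ereal (W i j) = bottleneck A T Ab Tb E W}"

definition max_margin_edges ::
  "'a set \<Rightarrow> 'b set \<Rightarrow> 'a set \<Rightarrow> 'b set \<Rightarrow> ('a \<Rightarrow> 'b \<Rightarrow> real) \<Rightarrow> ('a \<times> 'b) set" where
  "max_margin_edges A T Ab Tb W =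
     (if card (Ab \<times> Tb) = 1 then Ab \<times> Tb
      else (let Eb = bottleneck_edges A T Ab Tb (Ab \<times> Tb) W;
                f = (\<lambda>e. bottleneck A T Ab Tb (Ab \<times> Tb - {e}) W)
            in {e \<in> Eb. \<forall>e'\<in>Eb. f e' \<le> f e}))"

definition robustness_margin ::
  "'a set \<Rightarrow> 'b set \<Rightarrow> 'a set \<Rightarrow> 'b set \<Rightarrow> ('a \<Rightarrow> 'b \<Rightarrow> real) \<Rightarrow> ereal" where
  "robustness_margin A T Ab Tb W =
     (if card (Ab \<times> Tb) = 1 then \<infinity>
      else Sup ((\<lambda>(i, j). bottleneck A T Ab Tb (Ab \<times> Tb - {(i, j)}) W - ereal (W i j))
                 ` bottleneck_edges A T Ab Tb (Ab \<times> Tb) W))"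

end

theory Submission
  imports Defs
begin

text \<open>If deleting the edge e strictly raises the bottleneck weight, then no bottleneck minimiser
  can leave e unused: such a minimiser would stay admissible on the reduced edge set with the same
  bottleneck value. A positive robustness margin says precisely that deleting some bottleneck edge
  raises the bottleneck weight, and a maximum-margin edge raises it at least as much.\<close>

lemma bval_mono:
  assumes "E' \<subseteq> E"
  shows "bval asg E' W \<le> bval asg E W"
  unfolding bval_def using assms by (rule Sup_subset_mono[OF image_mono])

lemma bottleneck_le_bval:
  assumes "asg \<in> admissible A T Ab Tb E"
  shows "bottleneck A T Ab Tb E W \<le> bval asg E W"
  unfolding bottleneck_def using assms by (rule INF_lower)

lemma sum_remove_zero:
  assumes "finite S" "f x = 0"
  shows "sum f (S - {x}) = sum f S"
  using assms by (intro sum.mono_neutral_left) auto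

lemma admissible_remove_unused_edge:
  assumes "asg \<in> admissible A T Ab Tb E" "finite E" "asg i j = 0"
  shows "asg \<in> admissible A T Ab Tb (E - {(i, j)})"
proof -
  have col: "{i'. (i', j') \<in> E - {(i, j)}} = {i'. (i', j') \<in> E} - (if j' = j then {i} else {})"
    and row: "{j'. (i', j') \<in> E - {(i, j)}} = {j'. (i', j') \<in> E} - (if i' = i then {j} else {})"
    for i' j' by auto
  have "{i'. (i', j') \<in> E} \<subseteq> fst ` E" "{j'. (i', j') \<in> E} \<subseteq> snd ` E" for i' j'
    by (auto intro: rev_image_eqI)
  then have "finite {i'. (i', j') \<in> E}" "finite {j'. (i', j') \<in> E}" for i' j'
    using \<open>finite E\<close> by (auto intro: finite_subset)
  with assms(3) have "(\<Sum>i'\<in>{i'. (i', j') \<in> E - {(i, j)}}. asg i' j') = (\<Sum>i'\<in>{i'. (i', j') \<in> E}. asg i' j')"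
    and "(\<Sum>j'\<in>{j'. (i', j') \<in> E - {(i, j)}}. asg i' j') = (\<Sum>j'\<in>{j'. (i', j') \<in> E}. asg i' j')"
    for i' j' unfolding col row by (auto simp: sum_remove_zero)
  with assms(1) show ?thesis unfolding admissible_def by simp
qed

lemma bottleneck_minimiser_uses_critical_edge:
  assumes min: "asg \<in> bottleneck_min A T Ab Tb E W"
    and "finite E" "i \<in> A" "j \<in> T"
    and raise: "bottleneck A T Ab Tb E W < bottleneck A T Ab Tb (E - {(i, j)}) W"
  shows "asg i j = 1"
proof (rule ccontr)
  assume "asg i j \<noteq> 1"
  moreover have adm: "asg \<in> admissible A T Ab Tb E" and val: "bval asg E W = bottleneck A T Ab Tb E W"
    using min unfolding bottleneck_min_def by auto
  ultimately have "asg i j = 0"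
    using \<open>i \<in> A\<close> \<open>j \<in> T\<close> unfolding admissible_def is_assignment_def by auto
  with adm \<open>finite E\<close> have "asg \<in> admissible A T Ab Tb (E - {(i, j)})"
    by (rule admissible_remove_unused_edge)
  then have "bottleneck A T Ab Tb (E - {(i, j)}) W \<le> bval asg (E - {(i, j)}) W"
    by (rule bottleneck_le_bval)
  also have "\<dots> \<le> bval asg E W"
    by (rule bval_mono) auto
  finally show False using raise val by simp
qed

lemma max_margin_edge_raises_bottleneck:
  assumes "card (Ab \<times> Tb) \<noteq> 1" "robustness_margin A T Ab Tb W > 0"
    and "e \<in> max_margin_edges A T Ab Tb W"
  shows "bottleneck A T Ab Tb (Ab \<times> Tb) W < bottleneck A T Ab Tb (Ab \<times> Tb - {e}) W"
proof -
  let ?B = "bottleneck A T Ab Tb (Ab \<times> Tb) W"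
  let ?f = "\<lambda>e. bottleneck A T Ab Tb (Ab \<times> Tb - {e}) W"
  let ?Eb = "bottleneck_edges A T Ab Tb (Ab \<times> Tb) W"
  have "0 < Sup ((\<lambda>(i, j). ?f (i, j) - ereal (W i j)) ` ?Eb)"
    using assms(1,2) unfolding robustness_margin_def by simp
  then obtain i0 j0 where e0: "(i0, j0) \<in> ?Eb" and "0 < ?f (i0, j0) - ereal (W i0 j0)"
    by (auto simp: less_Sup_iff)
  then have "ereal (W i0 j0) < ?f (i0, j0)"
    by (cases "?f (i0, j0)") auto
  moreover have "ereal (W i0 j0) = ?B"
    using e0 unfolding bottleneck_edges_def by simp
  moreover have "?f (i0, j0) \<le> ?f e"
    using assms(1,3) e0 unfolding max_margin_edges_def Let_def by auto
  ultimately show ?thesis by simp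
qed

theorem proposition1:
  fixes A :: "'a set" and T :: "'b set" and W :: "'a \<Rightarrow> 'b \<Rightarrow> real"
    and Ab :: "'a set" and Tb :: "'b set" and asg :: "'a \<Rightarrow> 'b \<Rightarrow> nat"
  assumes "finite A" "finite T" "card A > 1" "card A \<ge> card T" "card T \<ge> 1"
    and "\<forall>i\<in>A. \<forall>j\<in>T. W i j \<ge> 0"
    and "Ab \<subseteq> A" "Tb \<subseteq> T"
    and "card Ab \<ge> card Tb" "card Tb \<ge> 1"
    and "card (Ab \<times> Tb) > 1"
    and "robustness_margin A T Ab Tb W > 0"
    and "asg \<in> bottleneck_min A T Ab Tb (Ab \<times> Tb) W"
    and "(i, j) \<in> max_margin_edges A T Ab Tb W"
  shows "asg i j = 1"
proof -
  have not_single: "card (Ab \<times> Tb) \<noteq> 1" using assms(11) by simp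
  have "(i, j) \<in> Ab \<times> Tb"
    using assms(14) not_single
    unfolding max_margin_edges_def bottleneck_edges_def Let_def by simp
  moreover have "finite (Ab \<times> Tb)"
    using assms(1,2,7,8) by (auto intro: finite_subset)
  moreover have "i \<in> A" "j \<in> T"
    using calculation(1) assms(7,8) by auto
  ultimately show ?thesis
    using bottleneck_minimiser_uses_critical_edge[OF assms(13)]
      max_margin_edge_raises_bottleneck[OF not_single assms(12,14)] by blast
qed

end
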